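(* Let $b_1,b_2,b_3,b_4\in\mathbb C^*$, $B=b_1b_2b_3b_4$, and let $\Lambda\in\mathbb C^*$ with $\Lambda^2\neq B$. Put $\lambda=\Lambda^2/B$, $$F_{\rm eq}=-\frac{B\Lambda(S_1^++2S_1^-\Lambda+S_3^-\Lambda^2)}{(B-\Lambda^2)^2},\quad G_{\rm eq}=-\frac{B\Lambda(S_3^++2S_1^+\Lambda+S_1^-\Lambda^2)}{(B-\Lambda^2)^2},$$ $$\mu=\frac{\Lambda(\Lambda+b_1b_2)(\Lambda+b_1b_3)(\Lambda+b_1b_4)(\Lambda+b_2b_3)(\Lambda+b_2b_4)(\Lambda+b_3b_4)}{(B-\Lambda^2)^4},$$ and for $\phi\in\mathbb C^*$ define $$F(\phi)=\phi+F_{\rm eq}+\mu\phi^{-1},\qquad G(\phi)=\Lambda\phi+G_{\rm eq}+\frac{B}{\Lambda}\mu\phi^{-1}.$$ Then, as identities of rational functions in $\phi$, with $F=F(\phi)$, $G=G(\phi)$, $\bar F=F(\lambda\phi)$, $\bar G=G(\lambda\phi)$: $$(GF-1)(G\bar F-1)=(b_1^{-1}G-1)(b_2^{-1}G-1)(b_3^{-1}G-1)(b_4^{-1}G-1),$$ $$(G\bar F-1)(\bar G\bar F-1)=(b_1\bar F-1)(b_2\bar F-1)(b_3\bar F-1)(b_4\bar F-1).$$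
   Context: $S_i^{\pm}$ denotes the $i$-th elementary symmetric polynomial in $b_1^{\pm1},b_2^{\pm1},b_3^{\pm1},b_4^{\pm1}$, i.e. $(z-b_1^{\pm1})(z-b_2^{\pm1})(z-b_3^{\pm1})(z-b_4^{\pm1})=z^4-S_1^\pm z^3+S_2^\pm z^2-S_3^\pm z+S_4^\pm$. *)

theory Defs
  imports Complex_Main
begin

definition esym1 :: "complex \<Rightarrow> complex \<Rightarrow> complex \<Rightarrow> complex \<Rightarrow> complex" where
  "esym1 a b c d = a + b + c + d"
definition esym2 :: "complex \<Rightarrow> complex \<Rightarrow> complex \<Rightarrow> complex \<Rightarrow> complex" where
  "esym2 a b c d = a*b + a*c + a*d + b*c + b*d + c*d"
definition esym3 :: "complex \<Rightarrow> complex \<Rightarrow> complex \<Rightarrow> complex \<Rightarrow> complex" where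
  "esym3 a b c d = a*b*c + a*b*d + a*c*d + b*c*d"
definition esym4 :: "complex \<Rightarrow> complex \<Rightarrow> complex \<Rightarrow> complex \<Rightarrow> complex" where
  "esym4 a b c d = a*b*c*d"

definition Sp1 where "Sp1 b1 b2 b3 b4 = esym1 b1 b2 b3 b4"
definition Sp3 where "Sp3 b1 b2 b3 b4 = esym3 b1 b2 b3 b4"
definition Sm1 where "Sm1 b1 b2 b3 b4 = esym1 (inverse b1) (inverse b2) (inverse b3) (inverse b4)"
definition Sm3 where "Sm3 b1 b2 b3 b4 = esym3 (inverse b1) (inverse b2) (inverse b3) (inverse b4)"

definition Bprod :: "complex \<Rightarrow> complex \<Rightarrow> complex \<Rightarrow> complex \<Rightarrow> complex" where
  "Bprod b1 b2 b3 b4 = b1*b2*b3*b4"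

definition Feq :: "complex \<Rightarrow> complex \<Rightarrow> complex \<Rightarrow> complex \<Rightarrow> complex \<Rightarrow> complex" where
  "Feq b1 b2 b3 b4 L = - (Bprod b1 b2 b3 b4 * L *
      (Sp1 b1 b2 b3 b4 + 2 * Sm1 b1 b2 b3 b4 * L + Sm3 b1 b2 b3 b4 * L^2))
      / (Bprod b1 b2 b3 b4 - L^2)^2"

definition Geq :: "complex \<Rightarrow> complex \<Rightarrow> complex \<Rightarrow> complex \<Rightarrow> complex \<Rightarrow> complex" where
  "Geq b1 b2 b3 b4 L = - (Bprod b1 b2 b3 b4 * L *
      (Sp3 b1 b2 b3 b4 + 2 * Sp1 b1 b2 b3 b4 * L + Sm1 b1 b2 b3 b4 * L^2))
      / (Bprod b1 b2 b3 b4 - L^2)^2"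

definition muc :: "complex \<Rightarrow> complex \<Rightarrow> complex \<Rightarrow> complex \<Rightarrow> complex \<Rightarrow> complex" where
  "muc b1 b2 b3 b4 L = L * (L + b1*b2) * (L + b1*b3) * (L + b1*b4) * (L + b2*b3)
      * (L + b2*b4) * (L + b3*b4) / (Bprod b1 b2 b3 b4 - L^2)^4"

definition Ffun :: "complex \<Rightarrow> complex \<Rightarrow> complex \<Rightarrow> complex \<Rightarrow> complex \<Rightarrow> complex \<Rightarrow> complex" where
  "Ffun b1 b2 b3 b4 L \<phi> = \<phi> + Feq b1 b2 b3 b4 L + muc b1 b2 b3 b4 L * inverse \<phi>"

definition Gfun :: "complex \<Rightarrow> complex \<Rightarrow> complex \<Rightarrow> complex \<Rightarrow> complex \<Rightarrow> complex \<Rightarrow> complex" where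
  "Gfun b1 b2 b3 b4 L \<phi> = L * \<phi> + Geq b1 b2 b3 b4 L
      + Bprod b1 b2 b3 b4 / L * muc b1 b2 b3 b4 L * inverse \<phi>"

end

theory Submission
  imports Defs
begin

text \<open>
  Everything depends on \<open>b\<^sub>1,\<dots>,b\<^sub>4\<close> only through their elementary symmetric functions
  \<open>e\<^sub>1,\<dots>,e\<^sub>4\<close> (with \<open>S\<^sub>1\<^sup>- = e\<^sub>3/e\<^sub>4\<close>, \<open>S\<^sub>3\<^sup>- = e\<^sub>1/e\<^sub>4\<close>, \<open>B = e\<^sub>4\<close>).
  Putting \<open>d = (e\<^sub>4 - \<Lambda>\<^sup>2)\<^sup>2\<close> and \<open>y = d\<phi>\<close>, one gets \<open>F = f(y)/(dy)\<close>, \<open>G = g(y)/(dy)\<close>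
  with quadratic polynomials \<open>f, g\<close> in \<open>y\<close>, and the shift \<open>\<phi> \<mapsto> \<lambda>\<phi>\<close> becomes
  \<open>y \<mapsto> \<Lambda>\<^sup>2y/e\<^sub>4\<close>. After clearing denominators both equations are polynomial identities
  in \<open>e\<^sub>1,\<dots>,e\<^sub>4, \<Lambda>\<close> and \<open>y\<close>, which are checked by normalisation.
\<close>

definition pair_poly :: "complex \<Rightarrow> complex \<Rightarrow> complex \<Rightarrow> complex \<Rightarrow> complex \<Rightarrow> complex" where
  "pair_poly e1 e2 e3 e4 L =
     L^6 + e2*L^5 + (e1*e3 - e4)*L^4 + (e1^2*e4 + e3^2 - 2*e2*e4)*L^3
     + e4*(e1*e3 - e4)*L^2 + e4^2*e2*L + e4^3"

lemma prod_pairs_eq_pair_poly: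
  "(L + b1*b2) * (L + b1*b3) * (L + b1*b4) * (L + b2*b3) * (L + b2*b4) * (L + b3*b4)
    = pair_poly (esym1 b1 b2 b3 b4) (esym2 b1 b2 b3 b4) (esym3 b1 b2 b3 b4) (esym4 b1 b2 b3 b4) L"
  unfolding esym1_def esym2_def esym3_def esym4_def pair_poly_def by algebra

definition F_num :: "complex \<Rightarrow> complex \<Rightarrow> complex \<Rightarrow> complex \<Rightarrow> complex \<Rightarrow> complex \<Rightarrow> complex" where
  "F_num e1 e2 e3 e4 L y = y^2 - L*(e4*e1 + 2*e3*L + e1*L^2)*y + L * pair_poly e1 e2 e3 e4 L"

definition G_num :: "complex \<Rightarrow> complex \<Rightarrow> complex \<Rightarrow> complex \<Rightarrow> complex \<Rightarrow> complex \<Rightarrow> complex" where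
  "G_num e1 e2 e3 e4 L y = L*y^2 - L*(e4*e3 + 2*e4*e1*L + e3*L^2)*y + e4 * pair_poly e1 e2 e3 e4 L"

lemma first_equation_polynomial:
  fixes e1 e2 e3 e4 L z :: complex
  defines "d \<equiv> (e4 - L^2)^2" and "y \<equiv> e4*z" and "yb \<equiv> L^2*z"
  defines "f \<equiv> F_num e1 e2 e3 e4 L y" and "fb \<equiv> F_num e1 e2 e3 e4 L yb"
    and "g \<equiv> G_num e1 e2 e3 e4 L y"
  shows "e4*y * (g*f - d^2*y^2) * (g*fb - d^2*y*yb)
    = yb * (g^4 - e1*g^3*d*y + e2*g^2*d^2*y^2 - e3*g*d^3*y^3 + e4*d^4*y^4)"
  unfolding assms F_num_def G_num_def pair_poly_def by algebra

lemma second_equation_polynomial: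
  fixes e1 e2 e3 e4 L z :: complex
  defines "d \<equiv> (e4 - L^2)^2" and "y \<equiv> e4*z" and "yb \<equiv> L^2*z"
  defines "fb \<equiv> F_num e1 e2 e3 e4 L yb"
    and "g \<equiv> G_num e1 e2 e3 e4 L y" and "gb \<equiv> G_num e1 e2 e3 e4 L yb"
  shows "yb * (g*fb - d^2*y*yb) * (gb*fb - d^2*yb^2)
    = y * (e4*fb^4 - e3*fb^3*d*yb + e2*fb^2*d^2*yb^2 - e1*fb*d^3*yb^3 + d^4*yb^4)"
  unfolding assms F_num_def G_num_def pair_poly_def by algebra

lemma first_equation_esym:
  fixes e1 e2 e3 e4 L y :: complex
  assumes "e4 \<noteq> 0" "L \<noteq> 0" "L^2 \<noteq> e4" "y \<noteq> 0"
  defines "d \<equiv> (e4 - L^2)^2" and "yb \<equiv> L^2/e4 * y"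
  defines "F \<equiv> F_num e1 e2 e3 e4 L y / (d*y)" and "Fb \<equiv> F_num e1 e2 e3 e4 L yb / (d*yb)"
    and "G \<equiv> G_num e1 e2 e3 e4 L y / (d*y)"
  shows "(G*F - 1) * (G*Fb - 1) = (G^4 - e1*G^3 + e2*G^2 - e3*G + e4) / e4"
proof -
  define z where "z = y/e4"
  have y: "y = e4*z" and yb: "yb = L^2*z"
    using assms(1) unfolding z_def yb_def by simp_all
  define f where "f = F_num e1 e2 e3 e4 L y"
  define fb where "fb = F_num e1 e2 e3 e4 L yb"
  define g where "g = G_num e1 e2 e3 e4 L y"
  have "d \<noteq> 0" "yb \<noteq> 0" using assms unfolding d_def yb_def by auto
  have poly: "e4*y * (g*f - d^2*y^2) * (g*fb - d^2*y*yb)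
      = yb * (g^4 - e1*g^3*d*y + e2*g^2*d^2*y^2 - e3*g*d^3*y^3 + e4*d^4*y^4)"
    unfolding f_def fb_def g_def d_def y yb by (rule first_equation_polynomial)
  have "(G*F - 1) * (G*Fb - 1) = (g*f - d^2*y^2) * (g*fb - d^2*y*yb) / (d^4*y^3*yb)"
    unfolding F_def Fb_def G_def f_def[symmetric] fb_def[symmetric] g_def[symmetric]
    using \<open>d \<noteq> 0\<close> \<open>yb \<noteq> 0\<close> assms(4) by (simp add: divide_simps) algebra
  also have "\<dots> = (g^4 - e1*g^3*d*y + e2*g^2*d^2*y^2 - e3*g*d^3*y^3 + e4*d^4*y^4) / (e4*d^4*y^4)"
    using \<open>d \<noteq> 0\<close> \<open>yb \<noteq> 0\<close> assms(1,4) by (simp add: frac_eq_eq) (use poly in algebra)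
  also have "\<dots> = (G^4 - e1*G^3 + e2*G^2 - e3*G + e4) / e4"
    unfolding G_def g_def[symmetric] using \<open>d \<noteq> 0\<close> assms(1,4)
    by (simp add: field_simps power2_eq_square power3_eq_cube power4_eq_xxxx)
  finally show ?thesis .
qed

lemma second_equation_esym:
  fixes e1 e2 e3 e4 L y :: complex
  assumes "e4 \<noteq> 0" "L \<noteq> 0" "L^2 \<noteq> e4" "y \<noteq> 0"
  defines "d \<equiv> (e4 - L^2)^2" and "yb \<equiv> L^2/e4 * y"
  defines "Fb \<equiv> F_num e1 e2 e3 e4 L yb / (d*yb)"
    and "G \<equiv> G_num e1 e2 e3 e4 L y / (d*y)" and "Gb \<equiv> G_num e1 e2 e3 e4 L yb / (d*yb)"
  shows "(G*Fb - 1) * (Gb*Fb - 1) = e4*Fb^4 - e3*Fb^3 + e2*Fb^2 - e1*Fb + 1"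
proof -
  define z where "z = y/e4"
  have y: "y = e4*z" and yb: "yb = L^2*z"
    using assms(1) unfolding z_def yb_def by simp_all
  define fb where "fb = F_num e1 e2 e3 e4 L yb"
  define g where "g = G_num e1 e2 e3 e4 L y"
  define gb where "gb = G_num e1 e2 e3 e4 L yb"
  have "d \<noteq> 0" "yb \<noteq> 0" using assms unfolding d_def yb_def by auto
  have poly: "yb * (g*fb - d^2*y*yb) * (gb*fb - d^2*yb^2)
      = y * (e4*fb^4 - e3*fb^3*d*yb + e2*fb^2*d^2*yb^2 - e1*fb*d^3*yb^3 + d^4*yb^4)"
    unfolding fb_def g_def gb_def d_def y yb by (rule second_equation_polynomial)
  have "(G*Fb - 1) * (Gb*Fb - 1) = (g*fb - d^2*y*yb) * (gb*fb - d^2*yb^2) / (d^4*y*yb^3)"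
    unfolding Fb_def G_def Gb_def fb_def[symmetric] g_def[symmetric] gb_def[symmetric]
    using \<open>d \<noteq> 0\<close> \<open>yb \<noteq> 0\<close> assms(4) by (simp add: divide_simps) algebra
  also have "\<dots> = (e4*fb^4 - e3*fb^3*d*yb + e2*fb^2*d^2*yb^2 - e1*fb*d^3*yb^3 + d^4*yb^4) / (d^4*yb^4)"
    using \<open>d \<noteq> 0\<close> \<open>yb \<noteq> 0\<close> assms(4) by (simp add: frac_eq_eq) (use poly in algebra)
  also have "\<dots> = e4*Fb^4 - e3*Fb^3 + e2*Fb^2 - e1*Fb + 1"
    unfolding Fb_def fb_def[symmetric] using \<open>d \<noteq> 0\<close> \<open>yb \<noteq> 0\<close>
    by (simp add: field_simps power2_eq_square power3_eq_cube power4_eq_xxxx)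
  finally show ?thesis .
qed

lemma Bprod_eq_esym4: "Bprod b1 b2 b3 b4 = esym4 b1 b2 b3 b4"
  unfolding Bprod_def esym4_def ..

lemma Sm1_eq_esym:
  assumes "b1 \<noteq> 0" "b2 \<noteq> 0" "b3 \<noteq> 0" "b4 \<noteq> 0"
  shows "Sm1 b1 b2 b3 b4 = esym3 b1 b2 b3 b4 / esym4 b1 b2 b3 b4"
  using assms unfolding Sm1_def esym1_def esym3_def esym4_def by (simp add: field_simps)

lemma Sm3_eq_esym:
  assumes "b1 \<noteq> 0" "b2 \<noteq> 0" "b3 \<noteq> 0" "b4 \<noteq> 0"
  shows "Sm3 b1 b2 b3 b4 = esym1 b1 b2 b3 b4 / esym4 b1 b2 b3 b4"
  using assms unfolding Sm3_def esym1_def esym3_def esym4_def by (simp add: field_simps)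

lemma muc_eq_pair_poly:
  "muc b1 b2 b3 b4 L = L * pair_poly (esym1 b1 b2 b3 b4) (esym2 b1 b2 b3 b4)
      (esym3 b1 b2 b3 b4) (esym4 b1 b2 b3 b4) L / (esym4 b1 b2 b3 b4 - L^2)^4"
  unfolding muc_def Bprod_eq_esym4 prod_pairs_eq_pair_poly[symmetric] by (simp add: mult.assoc)

lemma Ffun_eq_F_num:
  assumes "b1 \<noteq> 0" "b2 \<noteq> 0" "b3 \<noteq> 0" "b4 \<noteq> 0" "L^2 \<noteq> Bprod b1 b2 b3 b4" "\<phi> \<noteq> 0"
  defines "e1 \<equiv> esym1 b1 b2 b3 b4" and "e2 \<equiv> esym2 b1 b2 b3 b4"
    and "e3 \<equiv> esym3 b1 b2 b3 b4" and "e4 \<equiv> esym4 b1 b2 b3 b4"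
  defines "d \<equiv> (e4 - L^2)^2"
  shows "Ffun b1 b2 b3 b4 L \<phi> = F_num e1 e2 e3 e4 L (d*\<phi>) / (d*(d*\<phi>))"
proof -
  have "e4 \<noteq> 0" "d \<noteq> 0"
    using assms(1-5) unfolding d_def e4_def esym4_def Bprod_def by auto
  have Feq: "Feq b1 b2 b3 b4 L = - L*(e4*e1 + 2*e3*L + e1*L^2) / d"
    unfolding Feq_def Bprod_eq_esym4 Sm1_eq_esym[OF assms(1-4)] Sm3_eq_esym[OF assms(1-4)]
      Sp1_def Sp3_def e1_def[symmetric] e3_def[symmetric] e4_def[symmetric] d_def
    using \<open>e4 \<noteq> 0\<close> \<open>d \<noteq> 0\<close>[unfolded d_def] by (simp add: field_simps)
  have muc: "muc b1 b2 b3 b4 L = L * pair_poly e1 e2 e3 e4 L / d^2"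
    unfolding muc_eq_pair_poly e1_def e2_def e3_def e4_def d_def by (simp flip: power_mult)
  show ?thesis
    unfolding Ffun_def F_num_def Feq muc using \<open>d \<noteq> 0\<close> assms(6)
    by (simp add: field_simps power2_eq_square)
qed

lemma Gfun_eq_G_num:
  assumes "b1 \<noteq> 0" "b2 \<noteq> 0" "b3 \<noteq> 0" "b4 \<noteq> 0" "L \<noteq> 0"
    "L^2 \<noteq> Bprod b1 b2 b3 b4" "\<phi> \<noteq> 0"
  defines "e1 \<equiv> esym1 b1 b2 b3 b4" and "e2 \<equiv> esym2 b1 b2 b3 b4"
    and "e3 \<equiv> esym3 b1 b2 b3 b4" and "e4 \<equiv> esym4 b1 b2 b3 b4"
  defines "d \<equiv> (e4 - L^2)^2"
  shows "Gfun b1 b2 b3 b4 L \<phi> = G_num e1 e2 e3 e4 L (d*\<phi>) / (d*(d*\<phi>))"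
proof -
  have "e4 \<noteq> 0" "d \<noteq> 0"
    using assms(1-4,6) unfolding d_def e4_def esym4_def Bprod_def by auto
  have Geq: "Geq b1 b2 b3 b4 L = - L*(e4*e3 + 2*e4*e1*L + e3*L^2) / d"
    unfolding Geq_def Bprod_eq_esym4 Sm1_eq_esym[OF assms(1-4)]
      Sp1_def Sp3_def e1_def[symmetric] e3_def[symmetric] e4_def[symmetric] d_def
    using \<open>e4 \<noteq> 0\<close> \<open>d \<noteq> 0\<close>[unfolded d_def] by (simp add: field_simps)
  have muc: "muc b1 b2 b3 b4 L = L * pair_poly e1 e2 e3 e4 L / d^2"
    unfolding muc_eq_pair_poly e1_def e2_def e3_def e4_def d_def by (simp flip: power_mult)
  show ?thesis
    unfolding Gfun_def G_num_def Geq muc Bprod_eq_esym4 e4_def[symmetric] using \<open>d \<noteq> 0\<close> assms(5,7)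
    by (simp add: field_simps power2_eq_square)
qed

lemma prod_inverse_mult_sub_one:
  fixes b1 b2 b3 b4 G :: complex
  assumes "b1 \<noteq> 0" "b2 \<noteq> 0" "b3 \<noteq> 0" "b4 \<noteq> 0"
  shows "(inverse b1 * G - 1) * (inverse b2 * G - 1) * (inverse b3 * G - 1) * (inverse b4 * G - 1)
    = (G^4 - esym1 b1 b2 b3 b4 * G^3 + esym2 b1 b2 b3 b4 * G^2 - esym3 b1 b2 b3 b4 * G
        + esym4 b1 b2 b3 b4) / esym4 b1 b2 b3 b4"
  using assms unfolding esym1_def esym2_def esym3_def esym4_def
  by (simp add: field_simps) algebra

lemma prod_mult_sub_one:
  fixes b1 b2 b3 b4 F :: complex
  shows "(b1*F - 1) * (b2*F - 1) * (b3*F - 1) * (b4*F - 1)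
    = esym4 b1 b2 b3 b4 * F^4 - esym3 b1 b2 b3 b4 * F^3 + esym2 b1 b2 b3 b4 * F^2
      - esym1 b1 b2 b3 b4 * F + 1"
  unfolding esym1_def esym2_def esym3_def esym4_def by algebra

theorem mainTheorem3:
  fixes b1 b2 b3 b4 L \<phi> :: complex
  assumes "b1 \<noteq> 0" "b2 \<noteq> 0" "b3 \<noteq> 0" "b4 \<noteq> 0" "L \<noteq> 0"
    and "L^2 \<noteq> Bprod b1 b2 b3 b4"
    and "\<phi> \<noteq> 0"
  shows "let lam = L^2 / Bprod b1 b2 b3 b4;
             F = Ffun b1 b2 b3 b4 L \<phi>; G = Gfun b1 b2 b3 b4 L \<phi>;
             Fb = Ffun b1 b2 b3 b4 L (lam * \<phi>); Gb = Gfun b1 b2 b3 b4 L (lam * \<phi>)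
         in (G*F - 1) * (G*Fb - 1)
              = (inverse b1 * G - 1) * (inverse b2 * G - 1) * (inverse b3 * G - 1) * (inverse b4 * G - 1)
          \<and> (G*Fb - 1) * (Gb*Fb - 1)
              = (b1*Fb - 1) * (b2*Fb - 1) * (b3*Fb - 1) * (b4*Fb - 1)"
proof -
  define e1 where "e1 = esym1 b1 b2 b3 b4"
  define e2 where "e2 = esym2 b1 b2 b3 b4"
  define e3 where "e3 = esym3 b1 b2 b3 b4"
  define e4 where "e4 = esym4 b1 b2 b3 b4"
  define d where "d = (e4 - L^2)^2"
  have "e4 \<noteq> 0" "L^2 \<noteq> e4"
    using assms(1-4,6) unfolding e4_def esym4_def Bprod_def by auto
  have "d * \<phi> \<noteq> 0" "L^2 / e4 * \<phi> \<noteq> 0"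
    using \<open>e4 \<noteq> 0\<close> \<open>L^2 \<noteq> e4\<close> assms(5,7) unfolding d_def by auto
  have shift: "d * (L^2 / e4 * \<phi>) = L^2 / e4 * (d * \<phi>)" by simp
  note F = Ffun_eq_F_num[OF assms(1-4,6), folded e1_def e2_def e3_def e4_def, folded d_def]
  note G = Gfun_eq_G_num[OF assms(1-6), folded e1_def e2_def e3_def e4_def, folded d_def]
  note first = first_equation_esym[of e4 L "d*\<phi>" e1 e2 e3, folded d_def,
      OF \<open>e4 \<noteq> 0\<close> assms(5) \<open>L^2 \<noteq> e4\<close> \<open>d * \<phi> \<noteq> 0\<close>]
  note second = second_equation_esym[of e4 L "d*\<phi>" e1 e2 e3, folded d_def,
      OF \<open>e4 \<noteq> 0\<close> assms(5) \<open>L^2 \<noteq> e4\<close> \<open>d * \<phi> \<noteq> 0\<close>]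
  show ?thesis
    unfolding Let_def Bprod_eq_esym4 e4_def[symmetric]
      F[OF assms(7)] G[OF assms(7)] F[OF \<open>L^2 / e4 * \<phi> \<noteq> 0\<close>] G[OF \<open>L^2 / e4 * \<phi> \<noteq> 0\<close>] shift
    unfolding prod_inverse_mult_sub_one[OF assms(1-4)]
    unfolding prod_mult_sub_one e1_def[symmetric] e2_def[symmetric] e3_def[symmetric] e4_def[symmetric]
    by (rule conjI[OF first second])
qed

end
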